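(* Let $1\le t\le n$. If $S\subseteq N$ is an equivalence class with respect to connectedness within some $t$-switchable subset of $N$, then the ideal $\tilde{\mathcal{I}}^{\langle t\rangle}_S=(f_{i,a,b}: i\in[t],\ a,b\text{ connected in } S)$ of $R$ is prime.
   Context: Fix positive integers $n, r_1,\dots,r_n$, let $N=[r_1]\times\cdots\times[r_n]$, and let $R$ be the polynomial ring over a field in the variables $x_a$, $a\in N$. For $a,b\in N$ and $i\in[n]$, ${\rm s}(i,a,b)\in N$ has $i$-th component $b_i$ and other components equal to those of $a$. Let $d(a,b)=\#\{j: a_j\neq b_j\}$ and $f_{i,a,b}=x_ax_b-x_{{\rm s}(i,a,b)}x_{{\rm s}(i,b,a)}$. A subset $T\subseteq N$ is $t$-switchable if for all $a,b\in T$ with $d(a,b)=2$ and all $i\in[t]$, ${\rm s}(i,a,b)\in T$. Elements $a,b$ of a subset $T$ are connected in $T$ if there are $a_0=a,\dots,a_k=b$ in $T$ with $d(a_{j-1},a_j)\le 1$ for all $j$; this is an equivalence relation on $T$. *)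

theory Defs
  imports "HOL-Library.Poly_Mapping" "HOL-Algebra.Ideal"
begin

text \<open>Index set N = [r_1] x ... x [r_n], encoded as lists a of length n = length r with
  coordinates a!j in {0..<r!j} (0-based coordinates and 0-based positions j < n).\<close>
definition gridN :: "nat list \<Rightarrow> nat list set" where
  "gridN r = {a. length a = length r \<and> (\<forall>j<length r. a ! j < r ! j)}"

definition sw :: "nat \<Rightarrow> nat list \<Rightarrow> nat list \<Rightarrow> nat list" where
  "sw i a b = a[i := b ! i]"

definition hdist :: "nat list \<Rightarrow> nat list \<Rightarrow> nat" where
  "hdist a b = card {j. j < length a \<and> a ! j \<noteq> b ! j}"

text \<open>t-switchable: i ranges over [t] = {0..<t} in 0-based positions.\<close>
definition switchable :: "nat list \<Rightarrow> nat \<Rightarrow> nat list set \<Rightarrow> bool" where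
  "switchable r t T \<longleftrightarrow> T \<subseteq> gridN r \<and>
     (\<forall>a\<in>T. \<forall>b\<in>T. hdist a b = 2 \<longrightarrow> (\<forall>i<t. sw i a b \<in> T))"

definition connected_in :: "nat list set \<Rightarrow> nat list \<Rightarrow> nat list \<Rightarrow> bool" where
  "connected_in T a b \<longleftrightarrow> a \<in> T \<and> b \<in> T \<and>
     (\<lambda>x y. x \<in> T \<and> y \<in> T \<and> hdist x y \<le> 1)\<^sup>*\<^sup>* a b"

definition conn_class :: "nat list set \<Rightarrow> nat list \<Rightarrow> nat list set" where
  "conn_class T a = {b. connected_in T a b}"

type_synonym 'k mpoly = "(nat list \<Rightarrow>\<^sub>0 nat) \<Rightarrow>\<^sub>0 'k"

definition Var :: "nat list \<Rightarrow> 'k::field mpoly" where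
  "Var a = Poly_Mapping.single (Poly_Mapping.single a 1) 1"

definition fpoly :: "nat \<Rightarrow> nat list \<Rightarrow> nat list \<Rightarrow> 'k::field mpoly" where
  "fpoly i a b = Var a * Var b - Var (sw i a b) * Var (sw i b a)"

definition polyR :: "nat list \<Rightarrow> 'k::field mpoly ring" where
  "polyR r = \<lparr>carrier = {p. \<forall>m\<in>Poly_Mapping.keys p. Poly_Mapping.keys m \<subseteq> gridN r},
              monoid.mult = (*), one = 1, zero = 0, add = (+)\<rparr>"

definition Itilde :: "nat list \<Rightarrow> nat \<Rightarrow> nat list set \<Rightarrow> 'k::field mpoly set" where
  "Itilde r t S = genideal (polyR r) {fpoly i a b | i a b. i < t \<and> connected_in S a b}"

end

theory Submission
  imports Defs "HOL-Library.List_Lexorder"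
begin

alias keys = Poly_Mapping.keys
alias lookup = Poly_Mapping.lookup
alias single = Poly_Mapping.single

text \<open>Walking along a path inside \<open>S\<close>
  shows that \<open>S\<close> itself is closed under the switches \<open>s(i,a,b)\<close> with \<open>i \<le> t\<close>. Hence the ideal is
  contained in the kernel of the monomial map sending \<open>x\<^sub>a\<close> to
  \<open>y\<^sub>1\<^sub>,\<^sub>a\<^sub>1 \<cdots> y\<^sub>t\<^sub>,\<^sub>a\<^sub>t \<cdot> z\<^sub>(\<^sub>a\<^sub>t\<^sub>+\<^sub>1\<^sub>,\<^sub>\<dots>\<^sub>,\<^sub>a\<^sub>n\<^sub>)\<close> for \<open>a \<in> S\<close> and \<open>x\<^sub>a\<close> to a fresh variable
  \<open>w\<^sub>a\<close> otherwise, since a switch permutes the \<open>y\<close>-factors of a product \<open>x\<^sub>a x\<^sub>b\<close>. Conversely,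
  two monomials with the same image are congruent modulo the ideal, by induction on the degree:
  for a variable \<open>x\<^sub>b\<close> of the second monomial, the first one contains some \<open>x\<^sub>a\<close> with the same
  tail as \<open>b\<close>, and variables \<open>x\<^sub>c\<close> providing each coordinate \<open>b\<^sub>i\<close>, \<open>i \<le> t\<close>; switching these into
  \<open>a\<close> one coordinate at a time turns \<open>x\<^sub>a\<close> into \<open>x\<^sub>b\<close>. So the ideal is the kernel of a map into a
  polynomial ring, which is a domain, and is therefore prime.\<close>

lemma nth_eq_drop_eq_imp_eq:
  assumes "length a = length b" "\<forall>j<t. a ! j = b ! j" "drop t a = drop t b"
  shows "a = b"
proof (rule nth_equalityI)
  fix j
  assume "j < length a"
  then show "a ! j = b ! j"
    using assms nth_drop[of t a "j - t"] nth_drop[of t b "j - t"]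
    by (cases "j < t") auto
qed (rule assms(1))

lemma hdist_sym: "length a = length b \<Longrightarrow> hdist a b = hdist b a"
  unfolding hdist_def by metis

lemma hdist_list_update_le_1: "hdist x (x[i := v]) \<le> 1"
proof -
  have "{j. j < length x \<and> x ! j \<noteq> x[i := v] ! j} \<subseteq> {i}"
    by clarsimp (metis nth_list_update_neq)
  then have "card {j. j < length x \<and> x ! j \<noteq> x[i := v] ! j} \<le> card {i}"
    by (rule card_mono[rotated]) simp
  then show ?thesis
    by (simp add: hdist_def)
qed

lemma hdist_le_1_obtain:
  assumes "length x = length y" "hdist x y \<le> 1" "x \<noteq> y"
  obtains j where "j < length x" "x ! j \<noteq> y ! j" "\<forall>k<length x. k \<noteq> j \<longrightarrow> x ! k = y ! k"
proof -
  let ?D = "{j. j < length x \<and> x ! j \<noteq> y ! j}"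
  have "?D \<noteq> {}"
    using assms(1,3) nth_equalityI by blast
  moreover have "finite ?D" and "card ?D \<le> 1"
    using assms(2) by (simp_all add: hdist_def)
  ultimately have "card ?D = 1"
    by (simp add: Suc_leI card_gt_0_iff le_antisym)
  then obtain j where "?D = {j}"
    using card_1_singletonE by blast
  then show ?thesis
    using that by blast
qed

lemma hdist_eq_2I:
  assumes "i < length x" "j < length x" "i \<noteq> j" "x ! i \<noteq> y ! i" "x ! j \<noteq> y ! j"
    and "\<forall>k<length x. k \<noteq> i \<and> k \<noteq> j \<longrightarrow> x ! k = y ! k"
  shows "hdist x y = 2"
proof -
  have "{j. j < length x \<and> x ! j \<noteq> y ! j} = {i, j}"
    using assms by auto
  then show ?thesis
    using assms(3) by (simp add: hdist_def)
qed

section \<open>Connectedness classes\<close>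

definition adjacent_in :: "nat list set \<Rightarrow> nat list \<Rightarrow> nat list \<Rightarrow> bool" where
  "adjacent_in T = (\<lambda>x y. x \<in> T \<and> y \<in> T \<and> hdist x y \<le> 1)"

lemma adjacent_in_iff: "adjacent_in T x y \<longleftrightarrow> x \<in> T \<and> y \<in> T \<and> hdist x y \<le> 1"
  by (simp add: adjacent_in_def)

lemma conn_class_iff: "b \<in> conn_class T a \<longleftrightarrow> a \<in> T \<and> b \<in> T \<and> (adjacent_in T)\<^sup>*\<^sup>* a b"
  by (simp add: conn_class_def connected_in_def adjacent_in_def)

lemma connected_in_iff: "connected_in T a b \<longleftrightarrow> a \<in> T \<and> b \<in> T \<and> (adjacent_in T)\<^sup>*\<^sup>* a b"
  by (simp add: connected_in_def adjacent_in_def)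

lemma conn_class_adjacent_closed:
  assumes "y \<in> conn_class T a" "adjacent_in T y z"
  shows "z \<in> conn_class T a"
  using assms rtranclp.rtrancl_into_rtrancl[of "adjacent_in T" a y z]
  by (simp add: conn_class_iff adjacent_in_iff)

lemma adjacent_in_conn_class:
  assumes "(adjacent_in T)\<^sup>*\<^sup>* x y" and "x \<in> conn_class T a"
  shows "(adjacent_in (conn_class T a))\<^sup>*\<^sup>* x y \<and> y \<in> conn_class T a"
  using assms
proof (induction rule: rtranclp_induct)
  case (step y z)
  then have path: "(adjacent_in (conn_class T a))\<^sup>*\<^sup>* x y" and y: "y \<in> conn_class T a"
    by simp_all
  then have z: "z \<in> conn_class T a"
    using conn_class_adjacent_closed step.hyps(2) by blast
  with y step.hyps(2) have "adjacent_in (conn_class T a) y z"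
    by (simp add: adjacent_in_iff)
  with path z show ?case
    using rtranclp.rtrancl_into_rtrancl[of "adjacent_in (conn_class T a)" x y z] by simp
qed simp

lemma connected_in_conn_class:
  assumes "T \<subseteq> {x. length x = n}" and "b \<in> conn_class T a" "c \<in> conn_class T a"
  shows "connected_in (conn_class T a) b c"
proof -
  have "symp (adjacent_in T)"
  proof (rule sympI)
    fix x y
    assume "adjacent_in T x y"
    moreover from this have "length x = length y"
      using assms(1) by (auto simp: adjacent_in_iff)
    ultimately show "adjacent_in T y x"
      by (simp add: adjacent_in_iff hdist_sym)
  qed
  then have "symp (adjacent_in T)\<^sup>*\<^sup>*"
    by (rule symp_rtranclp)
  moreover have "(adjacent_in T)\<^sup>*\<^sup>* a b" "(adjacent_in T)\<^sup>*\<^sup>* a c"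
    using assms(2,3) by (simp_all add: conn_class_iff)
  ultimately have "(adjacent_in T)\<^sup>*\<^sup>* b c"
    using rtranclp_trans sympD by metis
  then show ?thesis
    using adjacent_in_conn_class assms(2,3) by (simp add: connected_in_iff)
qed

locale switchable_class =
  fixes r :: "nat list" and t :: nat and T :: "nat list set" and a0 :: "nat list"
  assumes t_le: "t \<le> length r" and switchable: "switchable r t T" and a0_in: "a0 \<in> T"
begin

abbreviation S :: "nat list set" where
  "S \<equiv> conn_class T a0"

lemma class_subset_grid: "x \<in> S \<Longrightarrow> x \<in> gridN r"
  using switchable by (auto simp: switchable_def conn_class_iff)

lemma length_class: "x \<in> S \<Longrightarrow> length x = length r"
  using class_subset_grid by (simp add: gridN_def)

lemma connected_in_class: "b \<in> S \<Longrightarrow> c \<in> S \<Longrightarrow> connected_in S b c"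
  by (rule connected_in_conn_class[where n = "length r"])
    (use switchable in \<open>auto simp: switchable_def gridN_def\<close>)

lemma switch_along_edge:
  assumes "x \<in> S" "y \<in> S" "hdist x y \<le> 1" and "i < t" and "x[i := v] \<in> S"
  shows "y[i := v] \<in> S"
proof (cases "x = y")
  case False
  have lx: "length x = length r" and ly: "length y = length r" and il: "i < length x"
    using assms(1,2,4) length_class t_le by auto
  obtain j where j: "j < length x" "x ! j \<noteq> y ! j" "\<forall>k<length x. k \<noteq> j \<longrightarrow> x ! k = y ! k"
    using hdist_le_1_obtain[OF _ assms(3) False] lx ly by auto
  have yT: "y \<in> T"
    using assms(2) by (simp add: conn_class_iff)
  consider "j = i" | "j \<noteq> i" "v = x ! i" | "j \<noteq> i" "v \<noteq> x ! i"
    by blast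
  then show ?thesis
  proof cases
    case 1
    then have "y[i := v] = x[i := v]"
      using lx ly j by (intro nth_equalityI) (auto simp: nth_list_update)
    then show ?thesis
      using assms(5) by simp
  next
    case 2
    then have "y ! i = v"
      using j il by simp
    then have "y[i := v] = y"
      using list_update_id[of y i] by simp
    then show ?thesis
      using assms(2) by simp
  next
    case 3
    have "x[i := v] \<in> T"
      using assms(5) by (simp add: conn_class_iff)
    moreover have "hdist y (x[i := v]) = 2"
      by (rule hdist_eq_2I[of i _ j]) (use lx ly j 3 il in \<open>auto simp: nth_list_update\<close>)
    ultimately have "sw i y (x[i := v]) \<in> T"
      using switchable assms(4) yT by (auto simp: switchable_def)
    then have "y[i := v] \<in> T"
      using il by (simp add: sw_def)
    with yT have "adjacent_in T y (y[i := v])"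
      using hdist_list_update_le_1 by (simp add: adjacent_in_iff)
    then show ?thesis
      using conn_class_adjacent_closed assms(2) by blast
  qed
qed (use assms in simp)

lemma switch_along_path:
  assumes "(adjacent_in S)\<^sup>*\<^sup>* x y" and "i < t" and "x[i := v] \<in> S"
  shows "y[i := v] \<in> S"
  using assms by (induction rule: rtranclp_induct) (auto simp: adjacent_in_iff intro: switch_along_edge)

lemma sw_in_class:
  assumes "a \<in> S" "b \<in> S" "i < t"
  shows "sw i a b \<in> S"
proof -
  have "(adjacent_in S)\<^sup>*\<^sup>* b a"
    using connected_in_class[OF assms(2,1)] by (simp add: connected_in_iff)
  then show ?thesis
    using switch_along_path assms by (simp add: sw_def)
qed

end

lemma keys_add_nat: "keys (p + q :: 'a \<Rightarrow>\<^sub>0 nat) = keys p \<union> keys q"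
  by (auto simp: in_keys_iff lookup_add)

lemma keys_sum_nat:
  "finite A \<Longrightarrow> keys (\<Sum>x\<in>A. f x :: 'b \<Rightarrow>\<^sub>0 nat) = (\<Union>x\<in>A. keys (f x))"
  by (auto simp: in_keys_iff lookup_sum)

definition monom_degree :: "('a \<Rightarrow>\<^sub>0 nat) \<Rightarrow> nat" where
  "monom_degree m = sum (lookup m) (keys m)"

lemma monom_degree_add: "monom_degree (m + n) = monom_degree m + monom_degree n"
proof -
  let ?A = "keys m \<union> keys n"
  have on_A: "monom_degree p = sum (lookup p) ?A"
    if "keys p \<subseteq> ?A" for p :: "'a \<Rightarrow>\<^sub>0 nat"
    unfolding monom_degree_def
    by (rule sum.mono_neutral_left) (use that in \<open>auto simp: in_keys_iff\<close>)
  have "monom_degree (m + n) = sum (lookup (m + n)) ?A"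
    by (rule on_A) (simp add: keys_add_nat)
  also have "\<dots> = monom_degree m + monom_degree n"
    by (simp add: on_A lookup_add sum.distrib)
  finally show ?thesis .
qed

lemma monom_degree_single [simp]: "monom_degree (single b n) = n"
  by (cases "n = 0") (simp_all add: monom_degree_def)

lemma single_add_minus_single:
  "b \<in> keys (m :: 'a \<Rightarrow>\<^sub>0 nat) \<Longrightarrow> m = single b 1 + (m - single b 1)"
  by (rule poly_mapping_eqI) (auto simp: lookup_add lookup_minus lookup_single when_def in_keys_iff)

lemma keys_minus_single_subset:
  "keys (m - single b 1 :: 'a \<Rightarrow>\<^sub>0 nat) \<subseteq> keys m"
  by (auto simp: in_keys_iff lookup_minus)

lemma in_keys_minus_single:
  "c \<in> keys (m :: 'a \<Rightarrow>\<^sub>0 nat) \<Longrightarrow> c \<noteq> b \<Longrightarrow> c \<in> keys (m - single b 1)"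
  by (auto simp: in_keys_iff lookup_minus lookup_single when_def)

section \<open>Monomial substitutions\<close>

definition monom_subst :: "('a \<Rightarrow> ('b \<Rightarrow>\<^sub>0 nat)) \<Rightarrow> ('a \<Rightarrow>\<^sub>0 nat) \<Rightarrow> 'b \<Rightarrow>\<^sub>0 nat" where
  "monom_subst g m = (\<Sum>a\<in>keys m. \<Sum>_<lookup m a. g a)"

definition poly_subst ::
  "('a \<Rightarrow> ('b \<Rightarrow>\<^sub>0 nat)) \<Rightarrow> (('a \<Rightarrow>\<^sub>0 nat) \<Rightarrow>\<^sub>0 'k::comm_ring_1) \<Rightarrow> ('b \<Rightarrow>\<^sub>0 nat) \<Rightarrow>\<^sub>0 'k" where
  "poly_subst g p = (\<Sum>m\<in>keys p. single (monom_subst g m) (lookup p m))"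

lemma lookup_monom_subst: "lookup (monom_subst g m) k = (\<Sum>a\<in>keys m. lookup m a * lookup (g a) k)"
  by (simp add: monom_subst_def lookup_sum)

lemma lookup_monom_subst_superset:
  assumes "finite A" "keys m \<subseteq> A"
  shows "lookup (monom_subst g m) k = (\<Sum>a\<in>A. lookup m a * lookup (g a) k)"
  unfolding lookup_monom_subst
  by (rule sum.mono_neutral_left) (use assms in \<open>auto simp: in_keys_iff\<close>)

lemma monom_subst_add: "monom_subst g (m + n) = monom_subst g m + monom_subst g n"
proof (rule poly_mapping_eqI)
  fix k
  have fin: "finite (keys m \<union> keys n)"
    by simp
  show "lookup (monom_subst g (m + n)) k = lookup (monom_subst g m + monom_subst g n) k"
    by (simp add: lookup_monom_subst_superset[OF fin] keys_add_nat lookup_add distrib_right sum.distrib)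
qed

lemma monom_subst_zero [simp]: "monom_subst g 0 = 0"
  by (simp add: monom_subst_def)

lemma monom_subst_single [simp]: "monom_subst g (single a 1) = g a"
  by (simp add: monom_subst_def)

lemma keys_monom_subst: "k \<in> keys (monom_subst g m) \<longleftrightarrow> (\<exists>a\<in>keys m. k \<in> keys (g a))"
  by (simp add: in_keys_iff lookup_monom_subst)

lemma monom_subst_eq_0_iff:
  assumes "\<And>a. g a \<noteq> 0"
  shows "monom_subst g m = 0 \<longleftrightarrow> m = 0"
proof
  assume m: "monom_subst g m = 0"
  have "a \<notin> keys m" for a
  proof
    assume a: "a \<in> keys m"
    from assms[of a] have "keys (g a) \<noteq> {}"
      by simp
    then obtain k where "k \<in> keys (g a)"
      by blast
    with a have "k \<in> keys (monom_subst g m)"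
      using keys_monom_subst[of k g m] by blast
    then show False
      using m by simp
  qed
  then have "keys m = {}"
    by blast
  then show "m = 0"
    by simp
qed simp

lemma poly_subst_superset:
  assumes "finite A" "keys p \<subseteq> A"
  shows "poly_subst g p = (\<Sum>m\<in>A. single (monom_subst g m) (lookup p m))"
  unfolding poly_subst_def
  by (rule sum.mono_neutral_left) (use assms in \<open>auto simp: in_keys_iff\<close>)

lemma poly_subst_add: "poly_subst g (p + q) = poly_subst g p + poly_subst g q"
proof -
  have fin: "finite (keys p \<union> keys q)"
    by simp
  show ?thesis
    using keys_add[of p q]
    by (simp add: poly_subst_superset[OF fin] lookup_add single_add sum.distrib)
qed

lemma poly_subst_zero [simp]: "poly_subst g 0 = 0"
  by (simp add: poly_subst_def)

lemma poly_subst_single [simp]: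
  "poly_subst g (single m c) = single (monom_subst g m) c"
  by (cases "c = 0") (simp_all add: poly_subst_def)

lemma poly_subst_sum: "poly_subst g (\<Sum>x\<in>A. f x) = (\<Sum>x\<in>A. poly_subst g (f x))"
  by (induction A rule: infinite_finite_induct) (simp_all add: poly_subst_add)

lemma poly_subst_diff: "poly_subst g (p - q) = poly_subst g p - poly_subst g q"
  by (metis add_diff_cancel diff_add_cancel poly_subst_add)

lemma poly_expansion: "p = (\<Sum>m\<in>keys p. single m (lookup p m))"
  by (rule poly_mapping_eqI) (simp add: lookup_sum lookup_single when_def in_keys_iff sum.delta)

lemma poly_subst_mult: "poly_subst g (p * q) = poly_subst g p * poly_subst g q"
proof -
  let ?P = "keys p" and ?Q = "keys q"
  have "p * q = (\<Sum>m\<in>?P. \<Sum>n\<in>?Q. single (m + n) (lookup p m * lookup q n))"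
    by (subst poly_expansion, subst (2) poly_expansion) (simp add: sum_product mult_single)
  then have "poly_subst g (p * q) = (\<Sum>m\<in>?P. \<Sum>n\<in>?Q. single
      (monom_subst g m + monom_subst g n) (lookup p m * lookup q n))"
    by (simp add: poly_subst_sum monom_subst_add)
  also have "\<dots> = poly_subst g p * poly_subst g q"
    by (simp add: poly_subst_def sum_product mult_single)
  finally show ?thesis .
qed

lemma poly_subst_one [simp]: "poly_subst g 1 = 1"
  by (metis poly_subst_single monom_subst_zero single_one)

lemma lookup_poly_subst:
  "lookup (poly_subst g p) k = (\<Sum>m\<in>{m\<in>keys p. monom_subst g m = k}. lookup p m)"
  unfolding poly_subst_def lookup_sum lookup_single
  by (simp add: when_def sum.inter_filter[symmetric])

lemma sum_single_fibre_representatives: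
  assumes "poly_subst g p = 0"
    and "\<And>m. m \<in> keys p \<Longrightarrow> monom_subst g (R (monom_subst g m)) = monom_subst g m"
  shows "(\<Sum>m\<in>keys p. single (R (monom_subst g m)) (lookup p m)) = 0"
proof (rule poly_mapping_eqI)
  let ?K = "keys p" and ?F = "\<lambda>m. R (monom_subst g m)"
  fix x
  have "lookup (\<Sum>m\<in>?K. single (?F m) (lookup p m)) x =
      (\<Sum>m\<in>{m\<in>?K. ?F m = x}. lookup p m)"
    by (simp add: lookup_sum lookup_single when_def sum.inter_filter[symmetric])
  also have "\<dots> = 0"
  proof (cases "\<exists>m1\<in>?K. ?F m1 = x")
    case True
    then obtain m1 where m1: "m1 \<in> ?K" "?F m1 = x"
      by blast
    have "?F m = x \<longleftrightarrow> monom_subst g m = monom_subst g m1" if "m \<in> ?K" for m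
      using assms(2)[OF that] assms(2)[OF m1(1)] m1(2) by metis
    then have "{m\<in>?K. ?F m = x} = {m\<in>?K. monom_subst g m = monom_subst g m1}"
      by blast
    then show ?thesis
      using assms(1) lookup_poly_subst[of g p "monom_subst g m1"] by simp
  next
    case False
    then have "{m\<in>?K. ?F m = x} = {}"
      by blast
    then show ?thesis
      by (simp only: sum.empty)
  qed
  finally show "lookup (\<Sum>m\<in>?K. single (?F m) (lookup p m)) x = lookup 0 x"
    by simp
qed

lemma polyR_carrier_iff: "p \<in> carrier (polyR r) \<longleftrightarrow> (\<forall>m\<in>keys p. keys m \<subseteq> gridN r)"
  by (simp add: polyR_def)

lemma polyR_ops [simp]:
  "monoid.mult (polyR r) = (*)" "add (polyR r) = (+)" "zero (polyR r) = 0" "one (polyR r) = 1"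
  by (simp_all add: polyR_def)

lemma polyR_single_closed: "keys m \<subseteq> gridN r \<Longrightarrow> single m c \<in> carrier (polyR r)"
  by (simp add: polyR_carrier_iff)

lemma polyR_zero_closed: "0 \<in> carrier (polyR r)"
  by (simp add: polyR_carrier_iff)

lemma polyR_one_closed: "1 \<in> carrier (polyR r)"
  by (simp add: polyR_carrier_iff)

lemma polyR_add_closed:
  "p \<in> carrier (polyR r) \<Longrightarrow> q \<in> carrier (polyR r) \<Longrightarrow> p + q \<in> carrier (polyR r)"
  using keys_add[of p q] by (auto simp: polyR_carrier_iff)

lemma polyR_uminus_closed: "p \<in> carrier (polyR r) \<Longrightarrow> - p \<in> carrier (polyR r)"
  by (simp add: polyR_carrier_iff)

lemma polyR_diff_closed:
  "p \<in> carrier (polyR r) \<Longrightarrow> q \<in> carrier (polyR r) \<Longrightarrow> p - q \<in> carrier (polyR r)"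
  by (metis diff_conv_add_uminus polyR_add_closed polyR_uminus_closed)

lemma polyR_mult_closed:
  "p \<in> carrier (polyR r) \<Longrightarrow> q \<in> carrier (polyR r) \<Longrightarrow> p * q \<in> carrier (polyR r)"
  using keys_mult[of p q] by (fastforce simp: polyR_carrier_iff keys_add_nat)

lemma cring_polyR: "cring (polyR r :: 'k::field mpoly ring)"
proof (rule cringI)
  show "abelian_group (polyR r :: 'k mpoly ring)"
  proof (rule abelian_groupI)
    fix x :: "'k mpoly"
    assume "x \<in> carrier (polyR r)"
    then show "\<exists>y\<in>carrier (polyR r). y \<oplus>\<^bsub>polyR r\<^esub> x = \<zero>\<^bsub>polyR r\<^esub>"
      by (intro bexI[of _ "- x"]) (simp_all add: polyR_uminus_closed)
  qed (simp_all add: polyR_add_closed polyR_zero_closed add.assoc add.commute)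
  show "comm_monoid (polyR r :: 'k mpoly ring)"
    by (rule comm_monoidI) (simp_all add: polyR_mult_closed polyR_one_closed mult.assoc mult.commute)
qed (simp add: distrib_right)

lemma ring_polyR: "ring (polyR r :: 'k::field mpoly ring)"
  using cring_polyR cring.axioms(1) by blast

section \<open>Toric ideals\<close>

definition toric_kernel :: "nat list \<Rightarrow> (nat list \<Rightarrow> ('b \<Rightarrow>\<^sub>0 nat)) \<Rightarrow> 'k::field mpoly set" where
  "toric_kernel r g = {p \<in> carrier (polyR r). poly_subst g p = 0}"

lemma toric_kernel_ideal: "ideal (toric_kernel r g :: 'k::field mpoly set) (polyR r)"
proof -
  interpret R: cring "polyR r :: 'k mpoly ring"
    by (rule cring_polyR)
  have neg: "\<ominus>\<^bsub>polyR r\<^esub> x = - x" if "x \<in> carrier (polyR r)" for x :: "'k mpoly"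
    by (rule R.minus_equality) (simp_all add: that polyR_uminus_closed)
  show ?thesis
  proof (rule idealI[OF R.ring_axioms])
    show "subgroup (toric_kernel r g :: 'k mpoly set) (add_monoid (polyR r))"
      by (rule R.add.subgroupI)
        (auto simp: toric_kernel_def neg poly_subst_add polyR_add_closed polyR_uminus_closed
          polyR_zero_closed poly_subst_diff[of g 0, simplified])
  qed (auto simp: toric_kernel_def poly_subst_mult polyR_mult_closed)
qed

text \<open>The target polynomial ring is a domain; \<open>Poly_Mapping\<close> provides this for linearly ordered
  variables, which is why \<open>nat list\<close> carries the lexicographic order.\<close>

lemma toric_kernel_primeideal:
  "primeideal (toric_kernel r g :: 'k::field mpoly set) (polyR r)"
  for g :: "nat list \<Rightarrow> 'b::linorder \<Rightarrow>\<^sub>0 nat"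
proof (rule primeidealI[OF toric_kernel_ideal cring_polyR])
  have "(1 :: 'k mpoly) \<notin> toric_kernel r g"
    by (simp add: toric_kernel_def)
  then show "carrier (polyR r) \<noteq> (toric_kernel r g :: 'k mpoly set)"
    using polyR_one_closed by blast
qed (auto simp: toric_kernel_def poly_subst_mult)

definition binom :: "('a \<Rightarrow>\<^sub>0 nat) \<Rightarrow> ('a \<Rightarrow>\<^sub>0 nat) \<Rightarrow> ('a \<Rightarrow>\<^sub>0 nat) \<Rightarrow>\<^sub>0 'k::comm_ring_1" where
  "binom m m' = single m 1 - single m' 1"

lemma poly_subst_binom: "poly_subst g (binom m m') = binom (monom_subst g m) (monom_subst g m')"
  by (simp add: binom_def poly_subst_diff)

lemma fpoly_binom:
  "fpoly i a b = binom (single a 1 + single b 1) (single (sw i a b) 1 + single (sw i b a) 1)"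
  by (simp add: fpoly_def binom_def Var_def mult_single)

context
  fixes r :: "nat list" and J :: "'k::field mpoly set"
  assumes J: "ideal J (polyR r)"
begin

lemma binom_refl_mem: "binom m m \<in> J"
  using additive_subgroup.zero_closed[OF ideal.axioms(1)[OF J]] by (simp add: binom_def)

lemma binom_trans_mem: "binom m m' \<in> J \<Longrightarrow> binom m' m'' \<in> J \<Longrightarrow> binom m m'' \<in> J"
  using additive_subgroup.a_closed[OF ideal.axioms(1)[OF J]] by (fastforce simp: binom_def)

lemma binom_shift_mem:
  assumes "binom m m' \<in> J" "keys x \<subseteq> gridN r"
  shows "binom (x + m) (x + m') \<in> J"
proof -
  have "single x 1 * binom m m' \<in> J"
    using ideal.I_l_closed[OF J assms(1) polyR_single_closed[OF assms(2)]] by simp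
  then show ?thesis
    by (simp add: binom_def mult_single right_diff_distrib)
qed

lemma binom_smult_mem:
  assumes "binom m m' \<in> J"
  shows "single m c - single m' c \<in> J"
proof -
  have "single 0 c * binom m m' \<in> J"
    using ideal.I_l_closed[OF J assms polyR_single_closed[of 0 r c]] by simp
  then show ?thesis
    by (simp add: binom_def mult_single right_diff_distrib)
qed

lemma ideal_sum_mem: "finite A \<Longrightarrow> (\<And>x. x \<in> A \<Longrightarrow> f x \<in> J) \<Longrightarrow> (\<Sum>x\<in>A. f x) \<in> J"
  by (induction A rule: finite_induct)
    (simp_all add: additive_subgroup.zero_closed[OF ideal.axioms(1)[OF J], simplified]
      additive_subgroup.a_closed[OF ideal.axioms(1)[OF J], simplified])

text \<open>Subtract from each monomial of an element of the kernel a representative of its fibre; the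
  representatives cancel since the coefficients of every fibre sum to zero.\<close>

lemma toric_kernel_subset_ideal:
  assumes binoms: "\<And>m m'. keys m \<subseteq> gridN r \<Longrightarrow> keys m' \<subseteq> gridN r \<Longrightarrow>
      monom_subst g m = monom_subst g m' \<Longrightarrow> binom m m' \<in> J"
  shows "toric_kernel r g \<subseteq> J"
proof
  fix p :: "'k mpoly"
  assume "p \<in> toric_kernel r g"
  then have pR: "p \<in> carrier (polyR r)" and p0: "poly_subst g p = 0"
    by (auto simp: toric_kernel_def)
  let ?K = "keys p" and ?c = "lookup p"
  define R where "R v = (SOME m0. m0 \<in> ?K \<and> monom_subst g m0 = v)" for v
  have R: "R (monom_subst g m) \<in> ?K \<and> monom_subst g (R (monom_subst g m)) = monom_subst g m"
    if "m \<in> ?K" for m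
    unfolding R_def by (rule someI[of _ m]) (use that in simp)
  have "single m (?c m) - single (R (monom_subst g m)) (?c m) \<in> J" if "m \<in> ?K" for m
    by (rule binom_smult_mem, rule binoms) (use pR that R[OF that] in \<open>auto simp: polyR_carrier_iff\<close>)
  then have "(\<Sum>m\<in>?K. single m (?c m) - single (R (monom_subst g m)) (?c m)) \<in> J"
    by (rule ideal_sum_mem[OF finite_keys])
  moreover have "(\<Sum>m\<in>?K. single (R (monom_subst g m)) (?c m)) = 0"
    by (rule sum_single_fibre_representatives[OF p0]) (use R in blast)
  ultimately have "(\<Sum>m\<in>?K. single m (?c m)) \<in> J"
    by (simp add: sum_subtractf)
  then show "p \<in> J"
    by (simp only: poly_expansion[symmetric])
qed

end

section \<open>The ideal of a switchable class is toric\<close>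

context switchable_class
begin

text \<open>The target variables \<open>y\<^sub>i\<^sub>,\<^sub>v\<close>, \<open>z\<^sub>u\<close> and \<open>w\<^sub>a\<close> are encoded as the lists \<open>[0, i, v]\<close>,
  \<open>1 # u\<close> and \<open>2 # a\<close>.\<close>

definition var_image :: "nat list \<Rightarrow> nat list \<Rightarrow>\<^sub>0 nat" where
  "var_image a = (if a \<in> S
     then (\<Sum>i<t. single [0, i, a ! i] 1) + single (1 # drop t a) 1
     else single (2 # a) 1)"

abbreviation image_monom :: "(nat list \<Rightarrow>\<^sub>0 nat) \<Rightarrow> nat list \<Rightarrow>\<^sub>0 nat" where
  "image_monom \<equiv> monom_subst var_image"

lemma keys_var_image_class:
  "a \<in> S \<Longrightarrow> k \<in> keys (var_image a) \<longleftrightarrow> (\<exists>i<t. k = [0, i, a ! i]) \<or> k = 1 # drop t a"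
  by (auto simp: var_image_def keys_add_nat keys_sum_nat)

lemma keys_var_image_nonclass: "a \<notin> S \<Longrightarrow> keys (var_image a) = {2 # a}"
  by (simp add: var_image_def)

lemma y_var_in_var_image: "[0, k, v] \<in> keys (var_image c) \<Longrightarrow> c \<in> S \<and> c ! k = v"
  by (cases "c \<in> S") (auto simp: keys_var_image_class keys_var_image_nonclass)

lemma z_var_in_var_image: "1 # u \<in> keys (var_image a) \<Longrightarrow> a \<in> S \<and> drop t a = u"
  by (cases "a \<in> S") (auto simp: keys_var_image_class keys_var_image_nonclass)

lemma w_var_in_var_image: "2 # b \<in> keys (var_image a) \<Longrightarrow> a = b"
  by (cases "a \<in> S") (auto simp: keys_var_image_class keys_var_image_nonclass)

lemma var_image_nonzero: "var_image a \<noteq> 0"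
proof -
  have "1 # drop t a \<in> keys (var_image a) \<or> 2 # a \<in> keys (var_image a)"
    by (cases "a \<in> S") (simp_all add: keys_var_image_class keys_var_image_nonclass)
  then show ?thesis
    by auto
qed

text \<open>A switch only exchanges \<open>y\<close>-factors.\<close>

lemma var_image_sw:
  assumes "a \<in> S" "c \<in> S" "i < t"
  shows "var_image (sw i a c) + var_image (sw i c a) = var_image a + var_image c"
proof -
  let ?Y = "\<lambda>x. \<Sum>j<t. single [0, j, x ! j] (1::nat)"
  have "i < length a" "i < length c"
    using assms length_class t_le by auto
  then have "single [0, j, sw i a c ! j] 1 + single [0, j, sw i c a ! j] 1 =
      single [0, j, a ! j] (1::nat) + single [0, j, c ! j] 1" for j
    by (cases "j = i") (auto simp: sw_def add.commute)
  then have "?Y (sw i a c) + ?Y (sw i c a) = ?Y a + ?Y c"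
    by (simp add: sum.distrib[symmetric])
  moreover have "drop t (sw i a c) = drop t a" "drop t (sw i c a) = drop t c"
    using assms(3) by (simp_all add: sw_def)
  ultimately show ?thesis
    using assms sw_in_class by (simp add: var_image_def ac_simps)
qed

lemma image_monom_switch:
  assumes "a \<in> S" "c \<in> S" "i < t"
  shows "image_monom (single (sw i a c) 1 + single (sw i c a) 1) =
    image_monom (single a 1 + single c 1)"
  by (simp only: monom_subst_add monom_subst_single var_image_sw[OF assms])

lemma fpoly_in_polyR:
  assumes "a \<in> S" "c \<in> S" "i < t"
  shows "fpoly i a c \<in> carrier (polyR r)"
  unfolding fpoly_binom binom_def
  by (intro polyR_diff_closed polyR_single_closed)
    (use assms sw_in_class class_subset_grid in \<open>auto simp: keys_add_nat\<close>)

lemma generators_subset_polyR: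
  "{fpoly i a c | i a c. i < t \<and> connected_in S a c} \<subseteq> carrier (polyR r)"
  using fpoly_in_polyR by (auto simp: connected_in_iff)

lemma Itilde_ideal: "ideal (Itilde r t S :: 'k::field mpoly set) (polyR r)"
  unfolding Itilde_def by (rule ring.genideal_ideal[OF ring_polyR generators_subset_polyR])

lemma binom_switch_mem:
  assumes "a \<in> S" "c \<in> S" "i < t"
  shows "(binom (single a 1 + single c 1) (single (sw i a c) 1 + single (sw i c a) 1) :: 'k::field mpoly)
    \<in> Itilde r t S"
proof -
  have "fpoly i a c \<in> {fpoly i a c | i a c. i < t \<and> connected_in S a c}"
    using assms connected_in_class by blast
  then have "(fpoly i a c :: 'k mpoly) \<in> Itilde r t S"
    unfolding Itilde_def using ring.genideal_self[OF ring_polyR generators_subset_polyR] by blast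
  then show ?thesis
    by (simp only: fpoly_binom)
qed

lemma Itilde_subset_toric_kernel: "(Itilde r t S :: 'k::field mpoly set) \<subseteq> toric_kernel r var_image"
  unfolding Itilde_def
proof (rule ring.genideal_minimal[OF ring_polyR toric_kernel_ideal], safe)
  fix i a c
  assume "i < t" "connected_in S a c"
  then have "a \<in> S" "c \<in> S"
    by (simp_all add: connected_in_iff)
  then have "poly_subst var_image (fpoly i a c :: 'k mpoly) = 0"
    using image_monom_switch[of a c i] \<open>i < t\<close>
    by (simp only: fpoly_binom poly_subst_binom) (simp add: binom_def)
  with \<open>i < t\<close> \<open>a \<in> S\<close> \<open>c \<in> S\<close> show "(fpoly i a c :: 'k mpoly) \<in> toric_kernel r var_image"
    using fpoly_in_polyR by (simp add: toric_kernel_def)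
qed

lemma binom_switch_in_monom:
  fixes m :: "nat list \<Rightarrow>\<^sub>0 nat"
  assumes "a \<in> keys m" "c \<in> keys m" "a \<noteq> c" "a \<in> S" "c \<in> S" "i < t"
    and "keys m \<subseteq> gridN r"
  obtains m2 where "(binom m m2 :: 'k::field mpoly) \<in> Itilde r t S" "image_monom m2 = image_monom m"
    "keys m2 \<subseteq> gridN r" "sw i a c \<in> keys m2"
proof -
  let ?e = "\<lambda>x. single x (1::nat)"
  define rest where "rest = m - ?e a - ?e c"
  have "c \<in> keys (m - ?e a)"
    using assms(2,3) in_keys_minus_single by metis
  then have m: "m = rest + (?e a + ?e c)"
    using single_add_minus_single[OF assms(1)] single_add_minus_single
    unfolding rest_def by (metis add.commute add.left_commute)
  have rest: "keys rest \<subseteq> gridN r"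
    using keys_minus_single_subset assms(7) unfolding rest_def by (meson order_trans)
  define m2 where "m2 = rest + (?e (sw i a c) + ?e (sw i c a))"
  show ?thesis
  proof
    show "(binom m m2 :: 'k mpoly) \<in> Itilde r t S"
      unfolding m2_def
      by (subst m, rule binom_shift_mem[OF Itilde_ideal binom_switch_mem[OF assms(4,5,6)] rest])
    show "image_monom m2 = image_monom m"
      unfolding m2_def
      by (subst m) (simp only: monom_subst_add[of var_image rest] image_monom_switch[OF assms(4,5,6)])
    show "keys m2 \<subseteq> gridN r"
      using rest sw_in_class[OF assms(4,5,6)] sw_in_class[OF assms(5,4,6)] class_subset_grid
      by (auto simp: m2_def keys_add_nat)
    show "sw i a c \<in> keys m2"
      by (simp add: m2_def keys_add_nat)
  qed
qed

text \<open>Each \<open>y\<^sub>k\<^sub>,\<^sub>b\<^sub>k\<close> in the image of \<open>m\<close> comes from some variable \<open>x\<^sub>c\<close> of \<open>m\<close> with \<open>c\<^sub>k = b\<^sub>k\<close>;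
  switching coordinate \<open>k\<close> of \<open>c\<close> into \<open>a\<close> fixes one more coordinate of \<open>a\<close>.\<close>

lemma binom_align_prefix:
  fixes m :: "nat list \<Rightarrow>\<^sub>0 nat"
  assumes "a \<in> keys m" "a \<in> S" "drop t a = drop t b" "keys m \<subseteq> gridN r"
    and "\<forall>i<t. [0, i, b ! i] \<in> keys (image_monom m)"
  shows "k \<le> t \<Longrightarrow> \<exists>m1 a1. (binom m m1 :: 'k::field mpoly) \<in> Itilde r t S \<and>
    image_monom m1 = image_monom m \<and> keys m1 \<subseteq> gridN r \<and>
    a1 \<in> keys m1 \<and> a1 \<in> S \<and> drop t a1 = drop t b \<and> (\<forall>j<k. a1 ! j = b ! j)"
proof (induction k)
  case 0
  show ?case
    using binom_refl_mem[OF Itilde_ideal] assms by blast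
next
  case (Suc k)
  then obtain m1 a1 where m1: "(binom m m1 :: 'k mpoly) \<in> Itilde r t S"
    "image_monom m1 = image_monom m" "keys m1 \<subseteq> gridN r"
    and a1: "a1 \<in> keys m1" "a1 \<in> S" "drop t a1 = drop t b" "\<forall>j<k. a1 ! j = b ! j"
    by auto
  have k: "k < t"
    using Suc.prems by simp
  show ?case
  proof (cases "a1 ! k = b ! k")
    case True
    with a1(4) have "\<forall>j<Suc k. a1 ! j = b ! j"
      using less_Suc_eq by auto
    with m1 a1(1-3) show ?thesis
      by (intro exI[of _ m1] exI[of _ a1]) simp
  next
    case False
    from assms(5) k m1(2) have "[0, k, b ! k] \<in> keys (image_monom m1)"
      by simp
    then obtain c where c: "c \<in> keys m1" "[0, k, b ! k] \<in> keys (var_image c)"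
      by (auto simp: keys_monom_subst)
    from c(2) have c': "c \<in> S" "c ! k = b ! k"
      by (simp_all add: y_var_in_var_image)
    with False have "a1 \<noteq> c"
      by auto
    then obtain m2 where m2: "(binom m1 m2 :: 'k mpoly) \<in> Itilde r t S"
      "image_monom m2 = image_monom m1" "keys m2 \<subseteq> gridN r"
      "sw k a1 c \<in> keys m2"
      using binom_switch_in_monom[OF a1(1) c(1) _ a1(2) c'(1) k m1(3)] by blast
    have "k < length a1"
      using a1(2) length_class k t_le by simp
    then have "\<forall>j<Suc k. sw k a1 c ! j = b ! j" "drop t (sw k a1 c) = drop t b"
      using a1(3,4) k c'(2) by (auto simp: sw_def nth_list_update less_Suc_eq)
    moreover have "(binom m m2 :: 'k mpoly) \<in> Itilde r t S"
      using binom_trans_mem[OF Itilde_ideal m1(1) m2(1)] .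
    ultimately show ?thesis
      using m1(2) m2(2-4) sw_in_class[OF a1(2) c'(1) k]
      by (intro exI[of _ m2] exI[of _ "sw k a1 c"]) simp
  qed
qed

lemma binom_reach_variable:
  fixes m :: "nat list \<Rightarrow>\<^sub>0 nat"
  assumes "keys m \<subseteq> gridN r"
    and "keys (var_image b) \<subseteq> keys (image_monom m)"
  obtains m1 where "(binom m m1 :: 'k::field mpoly) \<in> Itilde r t S" "image_monom m1 = image_monom m"
    "keys m1 \<subseteq> gridN r" "b \<in> keys m1"
proof (cases "b \<in> S")
  case True
  have "1 # drop t b \<in> keys (var_image b)"
    by (simp add: keys_var_image_class[OF True])
  with assms(2) have "1 # drop t b \<in> keys (image_monom m)"
    by blast
  then obtain a where a: "a \<in> keys m" "1 # drop t b \<in> keys (var_image a)"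
    by (auto simp: keys_monom_subst)
  from a(2) have a': "a \<in> S" "drop t a = drop t b"
    by (simp_all add: z_var_in_var_image)
  have "[0, i, b ! i] \<in> keys (var_image b)" if "i < t" for i
    using that by (auto simp: keys_var_image_class[OF True])
  with assms(2) have "\<forall>i<t. [0, i, b ! i] \<in> keys (image_monom m)"
    by blast
  then obtain m1 a1 where m1: "(binom m m1 :: 'k mpoly) \<in> Itilde r t S"
    "image_monom m1 = image_monom m" "keys m1 \<subseteq> gridN r"
    and a1: "a1 \<in> keys m1" "a1 \<in> S" "drop t a1 = drop t b" "\<forall>j<t. a1 ! j = b ! j"
    using binom_align_prefix[OF a(1) a' assms(1) _ order_refl] by blast
  have "a1 = b"
    by (rule nth_eq_drop_eq_imp_eq[OF _ a1(4,3)]) (simp add: length_class a1(2) True)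
  with m1 a1(1) show ?thesis
    by (rule_tac that) simp_all
next
  case False
  then have "2 # b \<in> keys (image_monom m)"
    using assms(2) by (simp add: keys_var_image_nonclass)
  then obtain a where "a \<in> keys m" "2 # b \<in> keys (var_image a)"
    by (auto simp: keys_monom_subst)
  then have "b \<in> keys m"
    using w_var_in_var_image by blast
  then show ?thesis
    using binom_refl_mem[OF Itilde_ideal] assms(1) by (rule_tac that[of m]) simp_all
qed

lemma binom_same_image_mem:
  fixes m m' :: "nat list \<Rightarrow>\<^sub>0 nat"
  assumes "keys m \<subseteq> gridN r" "keys m' \<subseteq> gridN r"
    and "image_monom m = image_monom m'"
  shows "(binom m m' :: 'k::field mpoly) \<in> Itilde r t S"
  using assms
proof (induction "monom_degree m'" arbitrary: m m' rule: less_induct)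
  case less
  show ?case
  proof (cases "m' = 0")
    case True
    then have "m = 0"
      using less.prems(3) monom_subst_eq_0_iff[of var_image, OF var_image_nonzero] by simp
    with True show ?thesis
      using binom_refl_mem[OF Itilde_ideal] by simp
  next
    case False
    then obtain b where b: "b \<in> keys m'"
      using keys_eq_empty by blast
    then have "keys (var_image b) \<subseteq> keys (image_monom m)"
      unfolding less.prems(3) by (auto simp: keys_monom_subst)
    then obtain m1 where m1: "(binom m m1 :: 'k mpoly) \<in> Itilde r t S"
      "image_monom m1 = image_monom m" "keys m1 \<subseteq> gridN r" "b \<in> keys m1"
      using binom_reach_variable less.prems(1) by blast
    let ?e = "single b (1::nat)"
    define x y where "x = m1 - ?e" and "y = m' - ?e"
    have mx: "m1 = ?e + x"
      unfolding x_def by (rule single_add_minus_single[OF m1(4)])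
    have my: "m' = ?e + y"
      unfolding y_def by (rule single_add_minus_single[OF b])
    have "image_monom ?e + image_monom x = image_monom ?e + image_monom y"
      using m1(2) less.prems(3) mx my by (metis monom_subst_add)
    then have "image_monom x = image_monom y"
      by simp
    moreover have "monom_degree y < monom_degree m'"
      by (subst my) (simp add: monom_degree_add)
    moreover have "keys x \<subseteq> gridN r" "keys y \<subseteq> gridN r"
      using m1(3) less.prems(2) keys_minus_single_subset unfolding x_def y_def by (meson order_trans)+
    ultimately have "(binom x y :: 'k mpoly) \<in> Itilde r t S"
      using less.hyps by blast
    moreover have "keys ?e \<subseteq> gridN r"
      using m1(3,4) by auto
    ultimately have "(binom m1 m' :: 'k mpoly) \<in> Itilde r t S"
      unfolding mx my by (rule binom_shift_mem[OF Itilde_ideal])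
    then show ?thesis
      by (rule binom_trans_mem[OF Itilde_ideal m1(1)])
  qed
qed

lemma Itilde_eq_toric_kernel: "(Itilde r t S :: 'k::field mpoly set) = toric_kernel r var_image"
proof
  show "toric_kernel r var_image \<subseteq> (Itilde r t S :: 'k mpoly set)"
    by (rule toric_kernel_subset_ideal[OF Itilde_ideal binom_same_image_mem])
qed (rule Itilde_subset_toric_kernel)

end

theorem theorem4p3:
  fixes r :: "nat list" and t :: nat and T S :: "nat list set"
  assumes "\<forall>j<length r. 0 < r ! j"
    and "1 \<le> t" and "t \<le> length r"
    and "switchable r t T"
    and "\<exists>a\<in>T. S = conn_class T a"
  shows "primeideal (Itilde r t S :: 'k::field mpoly set) (polyR r)"
proof -
  obtain a0 where "a0 \<in> T" and S: "S = conn_class T a0"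
    using assms(5) by blast
  then interpret switchable_class r t T a0
    using assms(3,4) by unfold_locales
  show ?thesis
    unfolding S Itilde_eq_toric_kernel by (rule toric_kernel_primeideal)
qed

end
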